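(* Assume $y_2\ne0$ and $p_1\ne-1$. Then $\widetilde w_0=0$ in $\mathfrak B(V)$ if and only if $(\widetilde q_{12}q_{22}-1)(q_{22}+1)(q_{11}\widetilde q_{12}^{\,2}q_{22}+1)=0$.
   Context: $\Bbbk$ algebraically closed of characteristic $0$. $V$ is braided of diagonal type with basis $x_1,x_2$, $c(x_i\otimes x_j)=q_{ij}x_j\otimes x_i$, $q_{ij}\in\Bbbk^\times$, $q_{ii}\ne1$, $\widetilde q_{12}=q_{12}q_{21}$. $\mathfrak B(V)$ is the Nichols algebra, $\mathbb Z^2$-graded by $\deg x_i=\alpha_i$; $q_{\alpha\beta}$ is the bicharacter with $q_{\alpha_i\alpha_j}=q_{ij}$. $y_0=x_2$, $y_{k+1}=x_1y_k-q_{11}^kq_{12}y_kx_1$, $\beta_k=k\alpha_1+\alpha_2$, $p_k=q_{11}^{k^2}\widetilde q_{12}^{\,k}q_{22}$, $(n)_q=1+\dots+q^{n-1}$. $w_0=y_2y_0-q_{\beta_2\beta_0}y_0y_2$ and $\widetilde w_0=w_0-\dfrac{q_{\beta_1\beta_0}(2)_{q_{11}}(1-q_{11}\widetilde q_{12})}{1+p_1}y_1^2$. *)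

theory Defs
  imports "HOL-Computational_Algebra.Polynomial"
begin

text \<open>Tensor algebra T(V) of V with basis x_1, x_2, realised as noncommutative
 polynomials: functions from words (lists of indices) to coefficients.
 Only words over {1,2} are relevant; the elements built below are finitely supported.\<close>

type_synonym 'a ncp = "nat list \<Rightarrow> 'a"

definition nc_add :: "'a::field ncp \<Rightarrow> 'a ncp \<Rightarrow> 'a ncp" where
  "nc_add u v = (\<lambda>w. u w + v w)"

definition nc_smult :: "'a::field \<Rightarrow> 'a ncp \<Rightarrow> 'a ncp" where
  "nc_smult c u = (\<lambda>w. c * u w)"

definition nc_mult :: "'a::field ncp \<Rightarrow> 'a ncp \<Rightarrow> 'a ncp" where
  "nc_mult u v = (\<lambda>w. \<Sum>k\<le>length w. u (take k w) * v (drop k w))"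

definition nc_var :: "nat \<Rightarrow> 'a::field ncp" where
  "nc_var i = (\<lambda>w. if w = [i] then 1 else 0)"

text \<open>Skew derivation d_i of T(V) (diagonal braiding q i j = q_ij):
 d_i(x_j) = delta_ij, d_i(u v) = u d_i(v) + q_{alpha_i, deg v} d_i(u) v.\<close>

definition skew_der :: "(nat \<Rightarrow> nat \<Rightarrow> 'a::field) \<Rightarrow> nat \<Rightarrow> 'a ncp \<Rightarrow> 'a ncp" where
  "skew_der q i u = (\<lambda>w. \<Sum>k\<le>length w.
      u (take k w @ i # drop k w) * prod_list (map (q i) (drop k w)))"

text \<open>u is zero in the Nichols algebra B(V) = T(V)/I(V) iff u lies in the radical
 of the canonical pairing, i.e. every iterated skew derivative of u has zero
 constant term.\<close>

definition nichols_zero :: "(nat \<Rightarrow> nat \<Rightarrow> 'a::field) \<Rightarrow> 'a ncp \<Rightarrow> bool" where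
  "nichols_zero q u \<longleftrightarrow> (\<forall>s. foldr (skew_der q) s u [] = 0)"

text \<open>Bicharacter on Z^2 (here N^2 suffices): q_{alpha beta}, with q_{alpha_i alpha_j} = q_ij.\<close>
definition qbi :: "(nat \<Rightarrow> nat \<Rightarrow> 'a::field) \<Rightarrow> nat \<times> nat \<Rightarrow> nat \<times> nat \<Rightarrow> 'a" where
  "qbi q a b = q 1 1 ^ (fst a * fst b) * q 1 2 ^ (fst a * snd b)
              * q 2 1 ^ (snd a * fst b) * q 2 2 ^ (snd a * snd b)"

definition beta :: "nat \<Rightarrow> nat \<times> nat" where
  "beta k = (k, 1)"

definition qt12 :: "(nat \<Rightarrow> nat \<Rightarrow> 'a::field) \<Rightarrow> 'a" where
  "qt12 q = q 1 2 * q 2 1"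

definition pk :: "(nat \<Rightarrow> nat \<Rightarrow> 'a::field) \<Rightarrow> nat \<Rightarrow> 'a" where
  "pk q k = q 1 1 ^ (k^2) * qt12 q ^ k * q 2 2"

definition qnum :: "nat \<Rightarrow> 'a::field \<Rightarrow> 'a" where
  "qnum n t = (\<Sum>i<n. t ^ i)"

fun yk :: "(nat \<Rightarrow> nat \<Rightarrow> 'a::field) \<Rightarrow> nat \<Rightarrow> 'a ncp" where
  "yk q 0 = nc_var 2"
| "yk q (Suc k) = nc_add (nc_mult (nc_var 1) (yk q k))
       (nc_smult (- (q 1 1 ^ k * q 1 2)) (nc_mult (yk q k) (nc_var 1)))"

definition w0 :: "(nat \<Rightarrow> nat \<Rightarrow> 'a::field) \<Rightarrow> 'a ncp" where
  "w0 q = nc_add (nc_mult (yk q 2) (yk q 0))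
            (nc_smult (- qbi q (beta 2) (beta 0)) (nc_mult (yk q 0) (yk q 2)))"

definition w0_tilde :: "(nat \<Rightarrow> nat \<Rightarrow> 'a::field) \<Rightarrow> 'a ncp" where
  "w0_tilde q = nc_add (w0 q)
     (nc_smult (- (qbi q (beta 1) (beta 0) * qnum 2 (q 1 1) * (1 - q 1 1 * qt12 q)
                   / (1 + pk q 1)))
               (nc_mult (yk q 1) (yk q 1)))"

end

theory Submission
  imports Defs "HOL-Library.Multiset"
begin

text \<open>
  \<open>y\<^sub>2\<close> and \<open>w0_tilde\<close> are homogeneous, of content \<open>x\<^sub>1x\<^sub>1x\<^sub>2\<close> and
  \<open>x\<^sub>1x\<^sub>1x\<^sub>2x\<^sub>2\<close>, and every skew derivation removes one letter. So each vanishes in the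
  Nichols algebra iff its iterated derivatives along the finitely many words of that content have
  zero constant term, a finite computation with its coefficients. For \<open>y\<^sub>2\<close> only the word
  \<open>x\<^sub>1x\<^sub>1x\<^sub>2\<close> contributes, giving
  \<open>(1 + q\<^sub>1\<^sub>1)(1 - q\<^sub>1\<^sub>2q\<^sub>2\<^sub>1)(1 - q\<^sub>1\<^sub>1q\<^sub>1\<^sub>2q\<^sub>2\<^sub>1)\<close>.
  For \<open>w0_tilde\<close> four of the six words give zero identically, \<open>x\<^sub>1x\<^sub>2x\<^sub>1x\<^sub>2\<close> gives
  zero by the choice of the coefficient of \<open>y\<^sub>1\<^sup>2\<close>, and \<open>x\<^sub>1x\<^sub>1x\<^sub>2x\<^sub>2\<close> gives, up to the
  factor \<open>-1/(1 + p\<^sub>1)\<close>, the stated product times the result for \<open>y\<^sub>2\<close>.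
\<close>

lemma nc_mult_var_left:
  "nc_mult (nc_var i) u w = (case w of [] \<Rightarrow> 0 | a # v \<Rightarrow> if a = i then u v else 0)"
proof (cases w)
  case (Cons a v)
  have "nc_mult (nc_var i) u w = (\<Sum>k\<le>length v. nc_var i (a # take k v) * u (drop k v))"
    unfolding nc_mult_def Cons length_Cons sum.atMost_Suc_shift by (simp add: nc_var_def)
  also have "\<dots> = (\<Sum>k\<le>length v. if k = 0 \<and> a = i then u v else 0)"
    by (rule sum.cong) (auto simp: nc_var_def)
  finally show ?thesis by (simp add: Cons)
qed (simp add: nc_mult_def nc_var_def)

lemma nc_mult_var_right:
  "nc_mult u (nc_var i) w = (if w \<noteq> [] \<and> last w = i then u (butlast w) else 0)"
proof (cases w rule: rev_cases)
  case (snoc v a)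
  have "nc_mult u (nc_var i) w = (\<Sum>k\<le>length v. u (take k v) * nc_var i (drop k v @ [a]))"
    by (simp add: nc_mult_def snoc nc_var_def)
  also have "\<dots> = (\<Sum>k\<le>length v. if k = length v \<and> a = i then u v else 0)"
    by (rule sum.cong) (auto simp: nc_var_def)
  finally show ?thesis by (simp add: snoc)
qed (simp add: nc_mult_def nc_var_def)

lemma nc_mult_eq_sum_list:
  "nc_mult u v w = (\<Sum>k\<leftarrow>[0..<Suc (length w)]. u (take k w) * v (drop k w))"
  by (simp add: nc_mult_def atMost_upto interv_sum_list_conv_sum_set_nat)

lemma foldr_skew_der_Cons:
  "foldr (skew_der q) (i # s) u w =
    (\<Sum>k\<leftarrow>[0..<Suc (length w)].
      foldr (skew_der q) s u (take k w @ i # drop k w) * prod_list (map (q i) (drop k w)))"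
  by (simp add: skew_der_def atMost_upto interv_sum_list_conv_sum_set_nat)

definition nc_homogeneous :: "nat multiset \<Rightarrow> 'a::field ncp \<Rightarrow> bool" where
  "nc_homogeneous M u \<longleftrightarrow> (\<forall>w. u w \<noteq> 0 \<longrightarrow> mset w = M)"

lemma nc_homogeneous_var: "nc_homogeneous {#i#} (nc_var i)"
  by (simp add: nc_homogeneous_def nc_var_def)

lemma nc_homogeneous_add:
  "nc_homogeneous M u \<Longrightarrow> nc_homogeneous M v \<Longrightarrow> nc_homogeneous M (nc_add u v)"
  unfolding nc_homogeneous_def nc_add_def by (metis add.left_neutral add.right_neutral)

lemma nc_homogeneous_smult: "nc_homogeneous M u \<Longrightarrow> nc_homogeneous M (nc_smult c u)"
  by (simp add: nc_homogeneous_def nc_smult_def)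

lemma nc_homogeneous_mult:
  assumes "nc_homogeneous M u" "nc_homogeneous N v"
  shows "nc_homogeneous (M + N) (nc_mult u v)"
  unfolding nc_homogeneous_def
proof (intro allI impI)
  fix w
  assume "nc_mult u v w \<noteq> 0"
  then obtain k where "u (take k w) * v (drop k w) \<noteq> 0"
    unfolding nc_mult_def by (meson sum.not_neutral_contains_not_neutral)
  then have "u (take k w) \<noteq> 0" "v (drop k w) \<noteq> 0"
    by simp_all
  with assms have "mset (take k w) = M" "mset (drop k w) = N"
    by (simp_all add: nc_homogeneous_def)
  then show "mset w = M + N"
    by (metis append_take_drop_id mset_append)
qed

lemma foldr_skew_der_eq_0:
  assumes "nc_homogeneous M u" "mset s + mset w \<noteq> M"
  shows "foldr (skew_der q) s u w = 0"
  using assms(2)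
proof (induction s arbitrary: w)
  case Nil
  with assms(1) show ?case by (auto simp: nc_homogeneous_def)
next
  case (Cons i s)
  have "mset (take k w @ i # drop k w) = add_mset i (mset w)" for k
    by (metis append_take_drop_id mset_append mset.simps(2) union_mset_add_mset_right)
  with Cons.prems Cons.IH show ?case
    by (simp add: foldr_skew_der_Cons del: foldr.simps(2))
qed

lemma nichols_zero_iff_homogeneous:
  assumes "nc_homogeneous M u"
  shows "nichols_zero q u \<longleftrightarrow> (\<forall>s. mset s = M \<longrightarrow> foldr (skew_der q) s u [] = 0)"
  using foldr_skew_der_eq_0[OF assms, of _ "[]"] by (auto simp: nichols_zero_def)

lemma nc_homogeneous_yk: "nc_homogeneous (add_mset 2 (replicate_mset k 1)) (yk q k)"
proof (induction k)
  case 0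
  show ?case by (simp add: nc_homogeneous_var)
next
  case (Suc k)
  let ?M = "add_mset 2 (replicate_mset k 1) :: nat multiset"
  have "{#1#} + ?M = add_mset 2 (replicate_mset (Suc k) 1)"
    and "?M + {#1#} = add_mset 2 (replicate_mset (Suc k) 1)"
    by simp_all
  with nc_homogeneous_mult[OF nc_homogeneous_var Suc.IH]
    nc_homogeneous_mult[OF Suc.IH nc_homogeneous_var]
  show ?case
    by (simp only: yk.simps) (metis nc_homogeneous_add nc_homogeneous_smult)
qed

lemma nc_homogeneous_w0_tilde: "nc_homogeneous {#1,1,2,2#} (w0_tilde q)"
proof -
  have mult: "nc_homogeneous {#1,1,2,2#} (nc_mult (yk q k) (yk q l))" if "k + l = 2" for k l
  proof -
    have content:
      "add_mset 2 (replicate_mset k 1) + add_mset 2 (replicate_mset l 1) = {#1,1,2,2::nat#}"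
      using that by (auto simp: multiset_eq_iff)
    show ?thesis
      using nc_homogeneous_mult[OF nc_homogeneous_yk[of k q] nc_homogeneous_yk[of l q]]
      by (simp only: content)
  qed
  show ?thesis
    unfolding w0_tilde_def w0_def by (intro nc_homogeneous_add nc_homogeneous_smult mult) simp_all
qed

lemma mset_eq_112_iff: "mset s = {#1,1,2#} \<longleftrightarrow> s \<in> {[1,1,2], [1,2,1], [2,1,1::nat]}"
proof
  assume s: "mset s = {#1,1,2#}"
  have "length s = 3" using arg_cong[OF s, of size] by simp
  then obtain a b c where abc: "s = [a,b,c]" by (auto simp: numeral_eq_Suc length_Suc_conv)
  have "set s \<subseteq> {1,2}" using arg_cong[OF s, of set_mset] by simp
  moreover have "count (mset s) 1 = 2" using s by simp
  ultimately show "s \<in> {[1,1,2], [1,2,1], [2,1,1]}" by (auto simp: abc)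
qed auto

lemma mset_eq_1122_iff:
  "mset s = {#1,1,2,2#} \<longleftrightarrow>
    s \<in> {[1,1,2,2], [1,2,1,2], [1,2,2,1], [2,1,1,2], [2,1,2,1], [2,2,1,1::nat]}"
proof
  assume s: "mset s = {#1,1,2,2#}"
  have "length s = 4" using arg_cong[OF s, of size] by simp
  then obtain a b c d where abcd: "s = [a,b,c,d]" by (auto simp: numeral_eq_Suc length_Suc_conv)
  have "set s \<subseteq> {1,2}" using arg_cong[OF s, of set_mset] by simp
  moreover have "count (mset s) 1 = 2" "count (mset s) 2 = 2" using s by simp_all
  ultimately show "s \<in> {[1,1,2,2], [1,2,1,2], [1,2,2,1], [2,1,1,2], [2,1,2,1], [2,2,1,1]}"
    by (auto simp: abcd)
qed auto

lemma yk_1: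
  "yk q 1 = nc_add (nc_mult (nc_var 1) (nc_var 2))
    (nc_smult (- q 1 2) (nc_mult (nc_var 2) (nc_var 1)))"
  by simp

lemma yk_2:
  "yk q 2 = nc_add (nc_mult (nc_var 1) (yk q 1))
    (nc_smult (- (q 1 1 * q 1 2)) (nc_mult (yk q 1) (nc_var 1)))"
  by (simp add: numeral_2_eq_2)

lemma pk_1: "pk q 1 = q 1 1 * qt12 q * q 2 2"
  by (simp add: pk_def)

definition w0_correction :: "(nat \<Rightarrow> nat \<Rightarrow> 'a::field) \<Rightarrow> 'a" where
  "w0_correction q = qbi q (beta 1) (beta 0) * qnum 2 (q 1 1) * (1 - q 1 1 * qt12 q) / (1 + pk q 1)"

lemma w0_tilde_eq:
  "w0_tilde q = nc_add (w0 q) (nc_smult (- w0_correction q) (nc_mult (yk q 1) (yk q 1)))"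
  by (simp add: w0_tilde_def w0_correction_def)

lemma w0_correction_mult:
  "1 + pk q 1 \<noteq> 0 \<Longrightarrow>
    (1 + pk q 1) * w0_correction q = q 1 2 * q 2 2 * (1 + q 1 1) * (1 - q 1 1 * qt12 q)"
  by (simp add: w0_correction_def qbi_def beta_def qnum_def numeral_2_eq_2)

text \<open>
  In all coefficient and derivative computations below \<open>One_nat_def\<close> is removed from the
  simpset: otherwise the letter \<open>1\<close> in words becomes \<open>Suc 0\<close> and the coefficient lemmas,
  stated for numerals, no longer match.
\<close>

lemmas nc_eval_simps = nc_add_def nc_smult_def nc_mult_var_left nc_mult_var_right
  nc_mult_eq_sum_list upt_rec nc_var_def yk_2 yk_1

lemma yk_2_coeffs:
  "yk q 2 [1,1,2] = 1"
  "yk q 2 [1,2,1] = - q 1 2 * (1 + q 1 1)"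
  "yk q 2 [2,1,1] = q 1 1 * q 1 2 ^ 2"
  by (simp_all add: nc_eval_simps algebra_simps power2_eq_square del: One_nat_def)

lemma w0_tilde_coeffs:
  "w0_tilde q [1,1,2,2] = 1"
  "w0_tilde q [1,2,1,2] = - q 1 2 * (1 + q 1 1) - w0_correction q"
  "w0_tilde q [1,2,2,1] = w0_correction q * q 1 2"
  "w0_tilde q [2,1,1,2] = q 1 2 ^ 2 * (q 1 1 - q 2 2) + w0_correction q * q 1 2"
  "w0_tilde q [2,1,2,1] = q 1 2 ^ 3 * q 2 2 * (1 + q 1 1) - w0_correction q * q 1 2 ^ 2"
  "w0_tilde q [2,2,1,1] = - q 1 1 * q 1 2 ^ 4 * q 2 2"
  by (simp_all add: w0_tilde_eq w0_def qbi_def beta_def nc_eval_simps algebra_simps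
      power2_eq_square power3_eq_cube power4_eq_xxxx del: One_nat_def)

lemma yk_2_pairings:
  "foldr (skew_der q) [1,1,2] (yk q 2) [] = (1 + q 1 1) * (1 - qt12 q) * (1 - q 1 1 * qt12 q)"
  "foldr (skew_der q) [1,2,1] (yk q 2) [] = 0"
  "foldr (skew_der q) [2,1,1] (yk q 2) [] = 0"
  by (simp_all add: foldr_skew_der_Cons upt_rec yk_2_coeffs qt12_def algebra_simps power2_eq_square
      del: foldr.simps(2) One_nat_def)

lemma w0_tilde_pairings_eq_0:
  "foldr (skew_der q) [1,2,2,1] (w0_tilde q) [] = 0"
  "foldr (skew_der q) [2,1,1,2] (w0_tilde q) [] = 0"
  "foldr (skew_der q) [2,1,2,1] (w0_tilde q) [] = 0"
  "foldr (skew_der q) [2,2,1,1] (w0_tilde q) [] = 0"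
  by (simp_all add: foldr_skew_der_Cons upt_rec w0_tilde_coeffs del: foldr.simps(2) One_nat_def)
    algebra+

text \<open>This is the pairing that determines the coefficient of \<open>y\<^sub>1\<^sup>2\<close> in \<open>w0_tilde\<close>.\<close>

lemma w0_tilde_pairing_1212:
  assumes "1 + pk q 1 \<noteq> 0"
  shows "foldr (skew_der q) [1,2,1,2] (w0_tilde q) [] = 0"
proof -
  have "(1 + pk q 1) * foldr (skew_der q) [1,2,1,2] (w0_tilde q) [] = 0"
    apply (simp add: foldr_skew_der_Cons upt_rec w0_tilde_coeffs
        del: foldr.simps(2) One_nat_def mult_eq_0_iff)
    using w0_correction_mult[OF assms] unfolding pk_1 qt12_def
    by algebra
  with assms show ?thesis by simp
qed

lemma w0_tilde_pairing_1122:
  assumes "1 + pk q 1 \<noteq> 0"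
  shows "(1 + pk q 1) * foldr (skew_der q) [1,1,2,2] (w0_tilde q) [] =
      - ((qt12 q * q 2 2 - 1) * (q 2 2 + 1) * (q 1 1 * qt12 q ^ 2 * q 2 2 + 1)
         * ((1 + q 1 1) * (1 - qt12 q) * (1 - q 1 1 * qt12 q)))"
  apply (simp add: foldr_skew_der_Cons upt_rec w0_tilde_coeffs
      del: foldr.simps(2) One_nat_def mult_eq_0_iff)
  using w0_correction_mult[OF assms] unfolding pk_1 qt12_def
  by algebra

lemma nichols_zero_yk_2_iff:
  "nichols_zero q (yk q 2) \<longleftrightarrow> (1 + q 1 1) * (1 - qt12 q) * (1 - q 1 1 * qt12 q) = 0"
proof -
  have "add_mset 2 (replicate_mset 2 1) = {#1,1,2::nat#}"
    by (simp add: numeral_2_eq_2)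
  then have "nichols_zero q (yk q 2) \<longleftrightarrow>
      (\<forall>s. mset s = {#1,1,2#} \<longrightarrow> foldr (skew_der q) s (yk q 2) [] = 0)"
    using nichols_zero_iff_homogeneous[OF nc_homogeneous_yk[of 2 q]] by (simp only:)
  then show ?thesis
    by (simp add: mset_eq_112_iff yk_2_pairings del: One_nat_def foldr.simps(2))
qed

lemma nichols_zero_w0_tilde_iff:
  assumes "1 + pk q 1 \<noteq> 0"
  shows "nichols_zero q (w0_tilde q) \<longleftrightarrow>
    (qt12 q * q 2 2 - 1) * (q 2 2 + 1) * (q 1 1 * qt12 q ^ 2 * q 2 2 + 1)
      * ((1 + q 1 1) * (1 - qt12 q) * (1 - q 1 1 * qt12 q)) = 0"
proof -
  have "nichols_zero q (w0_tilde q) \<longleftrightarrow> foldr (skew_der q) [1,1,2,2] (w0_tilde q) [] = 0"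
    unfolding nichols_zero_iff_homogeneous[OF nc_homogeneous_w0_tilde] mset_eq_1122_iff
    using w0_tilde_pairings_eq_0 w0_tilde_pairing_1212[OF assms] by auto
  also have "\<dots> \<longleftrightarrow> (1 + pk q 1) * foldr (skew_der q) [1,1,2,2] (w0_tilde q) [] = 0"
    using assms by simp
  finally show ?thesis
    unfolding w0_tilde_pairing_1122[OF assms] by simp
qed

theorem lemma4:
  fixes q :: "nat \<Rightarrow> nat \<Rightarrow> 'a::{alg_closed_field, field_char_0}"
  assumes "\<forall>i\<in>{1,2}. \<forall>j\<in>{1,2}. q i j \<noteq> 0"
    and "q 1 1 \<noteq> 1" and "q 2 2 \<noteq> 1"
    and "\<not> nichols_zero q (yk q 2)"
    and "pk q 1 \<noteq> -1"
  shows "nichols_zero q (w0_tilde q) \<longleftrightarrow>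
    (qt12 q * q 2 2 - 1) * (q 2 2 + 1) * (q 1 1 * qt12 q ^ 2 * q 2 2 + 1) = 0"
proof -
  have "1 + pk q 1 \<noteq> 0"
    using assms(5) by (metis add.commute add_eq_0_iff)
  moreover have "(1 + q 1 1) * (1 - qt12 q) * (1 - q 1 1 * qt12 q) \<noteq> 0"
    using assms(4) by (simp add: nichols_zero_yk_2_iff)
  ultimately show ?thesis
    by (simp add: nichols_zero_w0_tilde_iff)
qed

end
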